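(* Let $d\ge3$, $\beta>0$, $g:\mathbb{R}^d\to\mathbb{R}$ Lipschitz. There are positive constants $C_1,C_2$ depending only on $d,\beta,g$ such that for any $\varepsilon>0$, $t\in\mathbb{Z}_{\ge0}$ and $x,y\in\mathbb{Z}^d$, \[ |G_\varepsilon(t,x)-G_\varepsilon(t,y)|\le C_1\varepsilon|x-y|e^{C_2(\varepsilon|x|+\varepsilon|y|+\varepsilon^2t)}. \]
   Context: $\{S_n\}_{n\ge0}$ is simple symmetric random walk on $\mathbb{Z}^d$ started at the origin; $g_\varepsilon(x)=g(\varepsilon x)$ and $G_\varepsilon(t,x)=\mathbb{E}(e^{\beta g_\varepsilon(S_t+x)})$ for $t\in\mathbb{Z}_{\ge0}$, $x\in\mathbb{Z}^d$. *)

theory Defs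
  imports "HOL-Probability.Probability"
begin

text \<open>The lattice Z^d is modelled as int ^ 'd for a finite index type 'd (d = CARD('d)).\<close>

definition lat_emb :: "int ^ 'd \<Rightarrow> real ^ 'd" where
  "lat_emb x = (\<chi> i. real_of_int (x $ i))"

definition rw_steps :: "(int ^ 'd) set" where
  "rw_steps = {(\<chi> j. if j = i then s else 0) | i s. s \<in> {-1, 1::int}}"

primrec rw_pmf :: "nat \<Rightarrow> (int ^ 'd::finite) pmf" where
  "rw_pmf 0 = return_pmf 0"
| "rw_pmf (Suc t) = bind_pmf (rw_pmf t) (\<lambda>s. map_pmf (\<lambda>e. s + e) (pmf_of_set rw_steps))"

definition G_eps :: "(real ^ 'd \<Rightarrow> real) \<Rightarrow> real \<Rightarrow> real \<Rightarrow> nat \<Rightarrow> int ^ 'd::finite \<Rightarrow> real" where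
  "G_eps g \<beta> \<epsilon> t x =
     measure_pmf.expectation (rw_pmf t) (\<lambda>s. exp (\<beta> * g (\<epsilon> *\<^sub>R lat_emb (s + x))))"

end

theory Submission
  imports Defs
begin

text \<open>
  If g is L-Lipschitz then \<beta> g is \<gamma>-Lipschitz with \<gamma> = \<beta> L, and |e^a - e^b| \<le> |a - b| (e^a + e^b)
  bounds the difference of the integrands e^{\<beta> g(\<epsilon>(s + x))} and e^{\<beta> g(\<epsilon>(s + y))} by a constant
  multiple of \<gamma> \<epsilon> |x - y| e^{\<gamma> \<epsilon> (|x| + |y|)} e^{\<gamma> \<epsilon> |s|}. It remains to bound the exponential
  moment E e^{\<mu> |S_t|}: it is at most 2 E \<Phi>(S_t) for \<Phi>(s) = \<Sum>_i cosh(\<mu> d s_i), and the average of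
  \<Phi> over the 2d neighbours of s is at most cosh(\<mu> d) \<Phi>(s), so
  E \<Phi>(S_t) \<le> d cosh(\<mu> d)^t \<le> d e^{(\<mu> d)^2 t / 2}.
\<close>

lemma abs_exp_diff_le: "\<bar>exp a - exp b\<bar> \<le> \<bar>a - b\<bar> * (exp a + exp (b::real))"
proof -
  have one_sided: "exp a - exp b \<le> (a - b) * exp a" for a b :: real
  proof -
    have "exp a * (1 + (b - a)) \<le> exp a * exp (b - a)"
      by (intro mult_left_mono exp_ge_add_one_self) auto
    then show ?thesis by (simp add: exp_diff algebra_simps)
  qed
  have "(a - b) * exp a \<le> \<bar>a - b\<bar> * (exp a + exp b)"
    by (intro mult_mono) auto
  moreover have "(b - a) * exp b \<le> \<bar>a - b\<bar> * (exp a + exp b)"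
    by (intro mult_mono) auto
  ultimately show ?thesis
    using one_sided[of a b] one_sided[of b a] by linarith
qed

lemma cosh_le_exp_half_square: "cosh x \<le> exp (x\<^sup>2 / 2)"
  for x :: real
proof -
  have "cosh x = cosh \<bar>x\<bar>"
    by (cases "x \<ge> 0") simp_all
  moreover have "cosh y \<le> exp (y\<^sup>2 / 2)" if "y \<ge> 0" for y :: real
  proof -
    \<comment> \<open>cosh y = E e^{y X} for a fair \<plusminus>1 coin X, so Hoeffding's lemma applies.\<close>
    have "cosh y = exp (-y) * (1 + (1/2) * (exp (2 * y) - 1))"
      by (simp add: cosh_field_def exp_minus field_simps flip: exp_add)
    moreover have "-(2 * y) * (1/2) + ln (1 + (1/2) * (exp (2 * y) - 1)) \<le> (2 * y)\<^sup>2 / 8"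
      using Hoeffdings_lemma_aux[of "2 * y" "1/2"] that by simp
    ultimately have "ln (cosh y) \<le> y\<^sup>2 / 2"
      by (simp add: ln_mult add_pos_nonneg power2_eq_square)
    then show ?thesis
      by (metis cosh_real_pos exp_le_cancel_iff exp_ln)
  qed
  ultimately show ?thesis
    by (metis abs_ge_zero power2_abs)
qed

lemma exp_abs_le_cosh: "exp \<bar>x\<bar> \<le> 2 * cosh x"
  for x :: real
  by (cases "x \<ge> 0") (auto simp: cosh_field_def exp_minus)

lemma exp_lipschitz_le:
  fixes f :: "'a::real_normed_vector \<Rightarrow> real"
  assumes "L-lipschitz_on UNIV f"
  shows "exp (f u) \<le> exp \<bar>f 0\<bar> * exp (L * norm u)"
proof -
  have "f u - f 0 \<le> L * norm u"
    using lipschitz_on_normD[OF assms, of u 0] by simp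
  then show ?thesis by (simp flip: exp_add)
qed

lemma abs_exp_lipschitz_diff_le:
  fixes f :: "'a::real_normed_vector \<Rightarrow> real"
  assumes lip: "L-lipschitz_on UNIV f"
  shows "\<bar>exp (f (a + u)) - exp (f (a + v))\<bar>
     \<le> 2 * L * norm (u - v) * exp \<bar>f 0\<bar> * exp (L * norm a) * exp (L * (norm u + norm v))"
proof -
  have L: "L \<ge> 0" using lipschitz_on_nonneg[OF lip] .
  have exp_le: "exp (f (a + w)) \<le> exp \<bar>f 0\<bar> * exp (L * norm a) * exp (L * (norm u + norm v))"
    if "norm w \<le> norm u + norm v" for w
  proof -
    have "L * norm (a + w) \<le> L * norm a + L * (norm u + norm v)"
      using L that norm_triangle_ineq[of a w] by (simp add: mult_left_mono flip: distrib_left)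
    then show ?thesis
      using exp_lipschitz_le[OF lip, of "a + w"] by (simp flip: exp_add)
  qed
  have "\<bar>exp (f (a + u)) - exp (f (a + v))\<bar>
      \<le> \<bar>f (a + u) - f (a + v)\<bar> * (exp (f (a + u)) + exp (f (a + v)))"
    by (rule abs_exp_diff_le)
  also have "\<dots> \<le> (L * norm (u - v)) * (2 * (exp \<bar>f 0\<bar> * exp (L * norm a) * exp (L * (norm u + norm v))))"
    using lipschitz_on_normD[OF lip, of "a + u" "a + v"] exp_le[of u] exp_le[of v]
    by (intro mult_mono) auto
  finally show ?thesis by (simp add: mult_ac)
qed

lemma expectation_bind_pmf_finite:
  fixes f :: "'b \<Rightarrow> real"
  assumes fin_p: "finite (set_pmf p)" and fin_q: "\<And>x. x \<in> set_pmf p \<Longrightarrow> finite (set_pmf (q x))"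
  shows "measure_pmf.expectation (bind_pmf p q) f
       = measure_pmf.expectation p (\<lambda>x. measure_pmf.expectation (q x) f)"
proof -
  define B where "B = (\<Union>x\<in>set_pmf p. set_pmf (q x))"
  have fin_B: "finite B" unfolding B_def using fin_p fin_q by (rule finite_UN_I)
  have "measure_pmf.expectation (bind_pmf p q) f = (\<Sum>b\<in>B. f b * pmf (bind_pmf p q) b)"
    by (rule integral_measure_pmf_real[OF fin_B]) (auto simp: B_def)
  also have "\<dots> = (\<Sum>b\<in>B. f b * (\<Sum>x\<in>set_pmf p. pmf (q x) b * pmf p x))"
    by (simp add: pmf_bind integral_measure_pmf_real[OF fin_p])
  also have "\<dots> = (\<Sum>x\<in>set_pmf p. (\<Sum>b\<in>B. f b * pmf (q x) b) * pmf p x)"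
    by (simp add: sum_distrib_left sum_distrib_right mult_ac sum.swap[of _ B])
  also have "\<dots> = (\<Sum>x\<in>set_pmf p. measure_pmf.expectation (q x) f * pmf p x)"
    by (intro sum.cong refl arg_cong2[where f="(*)"] integral_measure_pmf_real[OF fin_B, symmetric])
       (auto simp: B_def)
  also have "\<dots> = measure_pmf.expectation p (\<lambda>x. measure_pmf.expectation (q x) f)"
    by (rule integral_measure_pmf_real[symmetric]) (auto simp: fin_p)
  finally show ?thesis .
qed

lemma rw_steps_eq_image:
  "(rw_steps :: (int ^ 'd::finite) set) = (\<lambda>(i, s). \<chi> j. if j = i then s else 0) ` (UNIV \<times> {-1, 1})"
  unfolding rw_steps_def by auto

lemma finite_rw_steps [simp]: "finite (rw_steps :: (int ^ 'd::finite) set)"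
  unfolding rw_steps_eq_image by simp

lemma rw_steps_nonempty [simp]: "(rw_steps :: (int ^ 'd::finite) set) \<noteq> {}"
  unfolding rw_steps_eq_image by simp

lemma rw_steps_nth: "e \<in> rw_steps \<Longrightarrow> e $ i \<in> {-1, 0, 1}"
  unfolding rw_steps_def by auto

lemma uminus_rw_steps: "e \<in> rw_steps \<Longrightarrow> - e \<in> rw_steps"
  unfolding rw_steps_def by (auto simp: vec_eq_iff intro!: exI[of _ "- _"])

lemma finite_set_pmf_rw_pmf: "finite (set_pmf (rw_pmf t :: (int ^ 'd::finite) pmf))"
  by (induction t) auto

lemma expectation_rw_pmf_Suc:
  fixes f :: "int ^ 'd::finite \<Rightarrow> real"
  shows "measure_pmf.expectation (rw_pmf (Suc t)) f
     = measure_pmf.expectation (rw_pmf t)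
         (\<lambda>s. measure_pmf.expectation (pmf_of_set rw_steps) (\<lambda>e. f (s + e)))"
  by (simp add: expectation_bind_pmf_finite finite_set_pmf_rw_pmf)

lemma expectation_rw_pmf_le_power:
  fixes f :: "int ^ 'd::finite \<Rightarrow> real"
  assumes "c \<ge> 0"
    and step: "\<And>s. measure_pmf.expectation (pmf_of_set rw_steps) (\<lambda>e. f (s + e)) \<le> c * f s"
  shows "measure_pmf.expectation (rw_pmf t) f \<le> c ^ t * f 0"
proof (induction t)
  case 0
  then show ?case by simp
next
  case (Suc t)
  have "measure_pmf.expectation (rw_pmf (Suc t)) f \<le> measure_pmf.expectation (rw_pmf t) (\<lambda>s. c * f s)"
    unfolding expectation_rw_pmf_Suc
    by (intro integral_mono step integrable_measure_pmf_finite finite_set_pmf_rw_pmf)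
  also have "\<dots> \<le> c * (c ^ t * f 0)"
    using Suc \<open>c \<ge> 0\<close> by (simp add: mult_left_mono)
  finally show ?case by simp
qed

definition coord_cosh_sum :: "real \<Rightarrow> int ^ 'd::finite \<Rightarrow> real" where
  "coord_cosh_sum \<mu> s = (\<Sum>i\<in>UNIV. cosh (\<mu> * of_int (s $ i)))"

lemma coord_cosh_sum_add_diff_le:
  assumes "e \<in> rw_steps"
  shows "coord_cosh_sum \<mu> (s + e) + coord_cosh_sum \<mu> (s - e) \<le> 2 * cosh \<mu> * coord_cosh_sum \<mu> s"
proof -
  have "coord_cosh_sum \<mu> (s + e) + coord_cosh_sum \<mu> (s - e)
      = (\<Sum>i\<in>UNIV. 2 * cosh (\<mu> * of_int (e $ i)) * cosh (\<mu> * of_int (s $ i)))"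
    unfolding coord_cosh_sum_def sum.distrib[symmetric]
    by (intro sum.cong refl) (simp add: distrib_left right_diff_distrib cosh_add cosh_diff)
  also have "\<dots> \<le> (\<Sum>i\<in>UNIV. 2 * cosh \<mu> * cosh (\<mu> * of_int (s $ i)))"
  proof (intro sum_mono mult_right_mono)
    fix i
    show "2 * cosh (\<mu> * of_int (e $ i)) \<le> 2 * cosh \<mu>"
      using rw_steps_nth[OF assms, of i] cosh_real_ge_1[of \<mu>] by auto
  qed simp
  finally show ?thesis
    by (simp add: coord_cosh_sum_def sum_distrib_left)
qed

lemma expectation_rw_step_coord_cosh_sum_le:
  fixes s :: "int ^ 'd::finite"
  shows "measure_pmf.expectation (pmf_of_set rw_steps) (\<lambda>e. coord_cosh_sum \<mu> (s + e))
     \<le> cosh \<mu> * coord_cosh_sum \<mu> s"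
proof -
  \<comment> \<open>The step set is symmetric, so pairing e with -e reduces the claim to
    cosh (a + b) + cosh (a - b) = 2 cosh a cosh b.\<close>
  have reflect: "(\<Sum>e\<in>rw_steps. coord_cosh_sum \<mu> (s + e)) = (\<Sum>e\<in>rw_steps. coord_cosh_sum \<mu> (s - e))"
    by (rule sum.reindex_bij_witness[of _ uminus uminus]) (auto simp: uminus_rw_steps)
  have "2 * (\<Sum>e\<in>rw_steps. coord_cosh_sum \<mu> (s + e))
      = (\<Sum>e\<in>rw_steps. coord_cosh_sum \<mu> (s + e) + coord_cosh_sum \<mu> (s - e))"
    by (simp add: sum.distrib flip: reflect)
  also have "\<dots> \<le> (\<Sum>e\<in>(rw_steps :: (int ^ 'd) set). 2 * cosh \<mu> * coord_cosh_sum \<mu> s)"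
    by (rule sum_mono) (rule coord_cosh_sum_add_diff_le)
  finally have "(\<Sum>e\<in>rw_steps. coord_cosh_sum \<mu> (s + e))
      \<le> card (rw_steps :: (int ^ 'd) set) * (cosh \<mu> * coord_cosh_sum \<mu> s)"
    by simp
  then show ?thesis
    by (simp add: integral_pmf_of_set divide_le_eq card_gt_0_iff mult.commute)
qed

lemma expectation_rw_pmf_coord_cosh_sum_le:
  "measure_pmf.expectation (rw_pmf t :: (int ^ 'd::finite) pmf) (coord_cosh_sum \<mu>)
     \<le> cosh \<mu> ^ t * CARD('d)"
proof -
  have "measure_pmf.expectation (rw_pmf t :: (int ^ 'd) pmf) (coord_cosh_sum \<mu>)
      \<le> cosh \<mu> ^ t * coord_cosh_sum \<mu> (0 :: int ^ 'd)"
    by (rule expectation_rw_pmf_le_power) (auto intro: expectation_rw_step_coord_cosh_sum_le)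
  then show ?thesis
    by (simp add: coord_cosh_sum_def)
qed

lemma exp_norm_lat_emb_le_coord_cosh_sum:
  fixes s :: "int ^ 'd::finite" and \<mu> :: real
  assumes "\<mu> \<ge> 0"
  shows "exp (\<mu> * norm (lat_emb s)) \<le> 2 * coord_cosh_sum (\<mu> * CARD('d)) s"
proof -
  have "Max (range (\<lambda>j. \<bar>s $ j\<bar>)) \<in> range (\<lambda>j. \<bar>s $ j\<bar>)"
    by (intro Max_in) auto
  then obtain i where i_max: "\<bar>s $ i\<bar> = Max (range (\<lambda>j. \<bar>s $ j\<bar>))"
    by (metis imageE)
  have i: "\<bar>s $ j\<bar> \<le> \<bar>s $ i\<bar>" for j
    unfolding i_max by (rule Max_ge) auto
  have "norm (lat_emb s) \<le> (\<Sum>j\<in>UNIV. \<bar>real_of_int (s $ j)\<bar>)"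
    using norm_le_l1_cart[of "lat_emb s"] by (simp add: lat_emb_def)
  also have "\<dots> \<le> CARD('d) * \<bar>real_of_int (s $ i)\<bar>"
    using sum_bounded_above[of UNIV "\<lambda>j. \<bar>real_of_int (s $ j)\<bar>"] i by (simp flip: of_int_abs)
  finally have "\<mu> * norm (lat_emb s) \<le> \<bar>\<mu> * CARD('d) * of_int (s $ i)\<bar>"
    using assms by (simp add: abs_mult mult_left_mono mult.assoc)
  then have "exp (\<mu> * norm (lat_emb s)) \<le> exp \<bar>\<mu> * CARD('d) * of_int (s $ i)\<bar>"
    by simp
  also have "\<dots> \<le> 2 * cosh (\<mu> * CARD('d) * of_int (s $ i))"
    by (rule exp_abs_le_cosh)
  also have "\<dots> \<le> 2 * coord_cosh_sum (\<mu> * CARD('d)) s"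
    unfolding coord_cosh_sum_def by (intro mult_left_mono member_le_sum) auto
  finally show ?thesis .
qed

lemma expectation_rw_pmf_exp_norm_le:
  fixes \<mu> :: real
  assumes "\<mu> \<ge> 0"
  shows "measure_pmf.expectation (rw_pmf t :: (int ^ 'd::finite) pmf) (\<lambda>s. exp (\<mu> * norm (lat_emb s)))
     \<le> 2 * CARD('d) * exp ((\<mu> * CARD('d))\<^sup>2 / 2 * t)"
proof -
  have "measure_pmf.expectation (rw_pmf t :: (int ^ 'd) pmf) (\<lambda>s. exp (\<mu> * norm (lat_emb s)))
      \<le> measure_pmf.expectation (rw_pmf t) (\<lambda>s :: int ^ 'd. 2 * coord_cosh_sum (\<mu> * CARD('d)) s)"
    using exp_norm_lat_emb_le_coord_cosh_sum[OF assms]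
    by (intro integral_mono integrable_measure_pmf_finite finite_set_pmf_rw_pmf)
  also have "\<dots> \<le> 2 * (cosh (\<mu> * CARD('d)) ^ t * CARD('d))"
    using expectation_rw_pmf_coord_cosh_sum_le by simp
  also have "\<dots> \<le> 2 * (exp ((\<mu> * CARD('d))\<^sup>2 / 2) ^ t * CARD('d))"
    by (intro mult_left_mono mult_right_mono power_mono cosh_le_exp_half_square) auto
  finally show ?thesis
    by (simp add: mult_ac flip: exp_of_nat_mult)
qed

lemma lat_emb_add: "lat_emb (a + b) = lat_emb a + lat_emb b"
  by (simp add: lat_emb_def vec_eq_iff)

lemma lat_emb_diff: "lat_emb (a - b) = lat_emb a - lat_emb b"
  by (simp add: lat_emb_def vec_eq_iff)

lemma G_eps_diff_le:
  fixes g :: "real ^ 'd::finite \<Rightarrow> real"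
  assumes lip: "L-lipschitz_on UNIV g" and "\<beta> \<ge> 0" and "\<epsilon> \<ge> 0"
  shows "\<bar>G_eps g \<beta> \<epsilon> t x - G_eps g \<beta> \<epsilon> t y\<bar>
     \<le> 2 * (\<beta> * L) * \<epsilon> * norm (lat_emb (x - y)) * exp \<bar>\<beta> * g 0\<bar>
        * exp (\<beta> * L * (\<epsilon> * norm (lat_emb x) + \<epsilon> * norm (lat_emb y)))
        * measure_pmf.expectation (rw_pmf t :: (int ^ 'd) pmf) (\<lambda>s. exp (\<beta> * L * \<epsilon> * norm (lat_emb s)))"
    (is "_ \<le> ?c * measure_pmf.expectation _ ?w")
proof -
  define F where "F z s = exp (\<beta> * g (\<epsilon> *\<^sub>R lat_emb (s + z)))" for z s :: "int ^ 'd"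
  have lip_\<beta>: "(\<beta> * L)-lipschitz_on UNIV (\<lambda>u. \<beta> * g u)"
    using lipschitz_on_cmult_real_nonneg[OF lip \<open>\<beta> \<ge> 0\<close>] .
  have pointwise: "\<bar>F x s - F y s\<bar> \<le> ?c * ?w s" for s
    using abs_exp_lipschitz_diff_le[OF lip_\<beta>, of "\<epsilon> *\<^sub>R lat_emb s" "\<epsilon> *\<^sub>R lat_emb x" "\<epsilon> *\<^sub>R lat_emb y"]
      \<open>\<epsilon> \<ge> 0\<close>
    by (simp add: F_def lat_emb_add lat_emb_diff scaleR_add_right mult_ac flip: scaleR_diff_right)
  have integrable: "integrable (measure_pmf (rw_pmf t)) f" for f :: "int ^ 'd \<Rightarrow> real"
    by (intro integrable_measure_pmf_finite finite_set_pmf_rw_pmf)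
  have "\<bar>G_eps g \<beta> \<epsilon> t x - G_eps g \<beta> \<epsilon> t y\<bar>
      = \<bar>measure_pmf.expectation (rw_pmf t) (\<lambda>s. F x s - F y s)\<bar>"
    by (simp add: G_eps_def F_def integrable)
  also have "\<dots> \<le> measure_pmf.expectation (rw_pmf t) (\<lambda>s. \<bar>F x s - F y s\<bar>)"
    by (rule integral_abs_bound)
  also have "\<dots> \<le> measure_pmf.expectation (rw_pmf t) (\<lambda>s. ?c * ?w s)"
    by (intro integral_mono integrable pointwise)
  finally show ?thesis
    by simp
qed

lemma G_eps_diff_le_exp:
  fixes g :: "real ^ 'd::finite \<Rightarrow> real" and L \<beta> \<epsilon> :: real
  assumes lip: "L-lipschitz_on UNIV g" and "\<beta> \<ge> 0" and "\<epsilon> \<ge> 0"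
  shows "\<bar>G_eps g \<beta> \<epsilon> t x - G_eps g \<beta> \<epsilon> t y\<bar>
     \<le> 4 * CARD('d) * exp \<bar>\<beta> * g 0\<bar> * (\<beta> * L) * \<epsilon> * norm (lat_emb (x - y))
        * exp ((\<beta> * L + (\<beta> * L * CARD('d))\<^sup>2)
               * (\<epsilon> * norm (lat_emb x) + \<epsilon> * norm (lat_emb y) + \<epsilon>\<^sup>2 * t))"
    (is "_ \<le> ?C1 * \<epsilon> * ?N * exp (?C2 * ?E)")
proof -
  define \<gamma> where "\<gamma> = \<beta> * L"
  have "\<gamma> \<ge> 0"
    using lipschitz_on_nonneg[OF lip] \<open>\<beta> \<ge> 0\<close> by (simp add: \<gamma>_def)
  define c where "c = 2 * \<gamma> * \<epsilon> * ?N * exp \<bar>\<beta> * g 0\<bar>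
    * exp (\<gamma> * (\<epsilon> * norm (lat_emb x) + \<epsilon> * norm (lat_emb y)))"
  have "c \<ge> 0"
    using \<open>\<gamma> \<ge> 0\<close> \<open>\<epsilon> \<ge> 0\<close> by (simp add: c_def)
  have "\<bar>G_eps g \<beta> \<epsilon> t x - G_eps g \<beta> \<epsilon> t y\<bar>
      \<le> c * measure_pmf.expectation (rw_pmf t :: (int ^ 'd) pmf) (\<lambda>s. exp (\<gamma> * \<epsilon> * norm (lat_emb s)))"
    using G_eps_diff_le[OF assms, of t x y] by (simp add: c_def \<gamma>_def)
  also have "\<dots> \<le> c * (2 * CARD('d) * exp ((\<gamma> * \<epsilon> * CARD('d))\<^sup>2 / 2 * t))"
    using expectation_rw_pmf_exp_norm_le[of "\<gamma> * \<epsilon>" t] \<open>\<gamma> \<ge> 0\<close> \<open>\<epsilon> \<ge> 0\<close> \<open>c \<ge> 0\<close>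
    by (intro mult_left_mono) auto
  also have "\<dots> = ?C1 * \<epsilon> * ?N
      * exp (\<gamma> * (\<epsilon> * norm (lat_emb x) + \<epsilon> * norm (lat_emb y)) + (\<gamma> * CARD('d))\<^sup>2 / 2 * (\<epsilon>\<^sup>2 * t))"
    by (simp add: c_def \<gamma>_def exp_add power_mult_distrib mult_ac)
  also have "\<dots> \<le> ?C1 * \<epsilon> * ?N * exp (?C2 * ?E)"
  proof -
    have "\<gamma> * (\<epsilon> * norm (lat_emb x) + \<epsilon> * norm (lat_emb y)) + (\<gamma> * CARD('d))\<^sup>2 / 2 * (\<epsilon>\<^sup>2 * t)
        \<le> ?C2 * ?E"
      using \<open>\<gamma> \<ge> 0\<close> \<open>\<epsilon> \<ge> 0\<close> unfolding \<gamma>_def[symmetric] distrib_right distrib_left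
      by (intro add_mono mult_right_mono) auto
    then show ?thesis
      using \<open>\<gamma> \<ge> 0\<close> \<open>\<epsilon> \<ge> 0\<close> by (intro mult_left_mono) (auto simp: \<gamma>_def)
  qed
  finally show ?thesis .
qed

theorem lemma5p2:
  fixes g :: "real ^ 'd::finite \<Rightarrow> real" and \<beta> :: real
  assumes "CARD('d) \<ge> 3"
    and "\<beta> > 0"
    and "\<exists>L. lipschitz_on L UNIV g"
  shows "\<exists>C1 > 0. \<exists>C2 > 0. \<forall>\<epsilon> > 0. \<forall>(t::nat) (x::int ^ 'd) (y::int ^ 'd).
           \<bar>G_eps g \<beta> \<epsilon> t x - G_eps g \<beta> \<epsilon> t y\<bar>
             \<le> C1 * \<epsilon> * norm (lat_emb (x - y))
                * exp (C2 * (\<epsilon> * norm (lat_emb x) + \<epsilon> * norm (lat_emb y) + \<epsilon>^2 * real t))"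
proof -
  obtain L where lip: "L-lipschitz_on UNIV g" and "L > 0"
    using assms(3) lipschitz_on_le[of _ UNIV g "_ + 1"] lipschitz_on_nonneg
    by (metis add_nonneg_pos le_add_same_cancel1 zero_less_one zero_le_one)
  have "\<beta> * L > 0"
    using \<open>\<beta> > 0\<close> \<open>L > 0\<close> by simp
  then have "4 * CARD('d) * exp \<bar>\<beta> * g 0\<bar> * (\<beta> * L) > 0"
    and "\<beta> * L + (\<beta> * L * CARD('d))\<^sup>2 > 0"
    by (simp_all add: add_pos_nonneg)
  with G_eps_diff_le_exp[OF lip] \<open>\<beta> > 0\<close> show ?thesis
    by (intro exI[of _ "4 * CARD('d) * exp \<bar>\<beta> * g 0\<bar> * (\<beta> * L)"]
        exI[of _ "\<beta> * L + (\<beta> * L * CARD('d))\<^sup>2"]) auto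
qed

end
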